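(* For each integer $a\ge 0$ let $I_a=\{1,3,5,\ldots,2a+1\}$ (so $s(I_a)=a$). For every nonnegative integer $i$ there exists a unique polynomial $P_i(t)\in\mathbb{Q}[t]$ of degree at most $i$ such that $P_i(a)=\frac{C_{a-i}(I_a)}{C_a(I_a)}$ for all integers $a\ge i$.
   Context: Partitions are drawn as Young diagrams $\mathbb{D}(\lambda)$ in English notation; $c_{i,j}$ is the cell in row $i$, column $j$. The hook length $h_\lambda(c)$ is the number of cells of $\mathbb{D}(\lambda)$ weakly right of $c$ in its row or weakly below $c$ in its column (counting $c$ once). For $\mu\subseteq\lambda$, an excited diagram of $\lambda/\mu$ is a subset of $\mathbb{D}(\lambda)$ obtained from $\mathbb{D}(\mu)$ by repeatedly replacing a cell $c_{i,j}\in D$ by $c_{i+1,j+1}$, allowed iff $c_{i+1,j+1}\in\mathbb{D}(\lambda)$ and none of $c_{i,j+1},c_{i+1,j},c_{i+1,j+1}$ lies in $D$; $\mathbb{E}(\lambda/\mu)$ is their set. A ribbon with $n$ cells is read from its lower-left to its upper-right cell, each successive cell directly right of or directly above the previous; it corresponds to the set of $i\in\{1,\ldots,n-1\}$ with cell $i$ directly below cell $i+1$. A descent set is a non-empty finite set $I$ of positive integers; $\lambda^I$ is the unique partition with $\lambda^I_1=\lambda^I_2$ such that the cells $c_{i,j}\in\mathbb{D}(\lambda^I)$ with fewer than three of $c_{i,j+1},c_{i+1,j},c_{i+1,j+1}$ in $\mathbb{D}(\lambda^I)$ form a ribbon corresponding to $I$; this ribbon is $\mathbb{D}(\lambda^I)\setminus\mathbb{D}(\mu^I)$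 for a partition $\mu^I$. Let $s(I)=\lambda^I_1-1$. Naruse-Newton coefficients: every excited diagram of $\lambda^I/\mu^I$ meets row 1 in $\{c_{1,1},\ldots,c_{1,r}\}$, $0\le r\le s$; for $0\le j\le s(I)$, $C_j(I)=\sum_D\prod_{c\in D,\,c\notin\text{row }1}h_{\lambda^I}(c)$, summed over $D\in\mathbb{E}(\lambda^I/\mu^I)$ with exactly $s-j$ cells in row 1. *)

theory Defs
  imports "HOL-Computational_Algebra.Polynomial"
begin

text \<open>Partitions are lists of positive naturals in weakly decreasing order.
  Cells are pairs (row, column), both 1-indexed (English notation).\<close>

definition is_partition :: "nat list \<Rightarrow> bool" where
  "is_partition lam \<longleftrightarrow> sorted (rev lam) \<and> 0 \<notin> set lam"

definition diagram :: "nat list \<Rightarrow> (nat \<times> nat) set" where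
  "diagram lam = {(i, j). 1 \<le> i \<and> i \<le> length lam \<and> 1 \<le> j \<and> j \<le> lam ! (i - 1)}"

definition hook :: "nat list \<Rightarrow> nat \<times> nat \<Rightarrow> nat" where
  "hook lam c = card {j. (fst c, j) \<in> diagram lam \<and> snd c \<le> j}
              + card {i. (i, snd c) \<in> diagram lam \<and> fst c < i}"

inductive_set excited :: "nat list \<Rightarrow> nat list \<Rightarrow> (nat \<times> nat) set set"
  for lam mu where
  base: "diagram mu \<in> excited lam mu"
| move: "\<lbrakk> D \<in> excited lam mu; (i, j) \<in> D; (i + 1, j + 1) \<in> diagram lam;
           (i, j + 1) \<notin> D; (i + 1, j) \<notin> D; (i + 1, j + 1) \<notin> D \<rbrakk>
         \<Longrightarrow> insert (i + 1, j + 1) (D - {(i, j)}) \<in> excited lam mu"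

text \<open>R is a ribbon (with cells listed from lower-left to upper-right, each
  next cell directly right of or directly above the previous) corresponding to
  the set I of positions i (1-indexed) with cell i directly below cell i+1.\<close>
definition ribbon_of :: "(nat \<times> nat) set \<Rightarrow> nat set \<Rightarrow> bool" where
  "ribbon_of R I \<longleftrightarrow> (\<exists>cs :: (nat \<times> nat) list. cs \<noteq> [] \<and> set cs = R \<and>
     (\<forall>k. k + 1 < length cs \<longrightarrow>
        (cs ! (k + 1) = (fst (cs ! k), snd (cs ! k) + 1) \<or>
         (fst (cs ! k) = fst (cs ! (k + 1)) + 1 \<and> snd (cs ! (k + 1)) = snd (cs ! k)))) \<and>
     I = {i. 1 \<le> i \<and> i < length cs \<and> fst (cs ! (i - 1)) = fst (cs ! i) + 1})"

definition rim :: "nat list \<Rightarrow> (nat \<times> nat) set" where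
  "rim lam = {(i, j) \<in> diagram lam.
     card ({(i, j + 1), (i + 1, j), (i + 1, j + 1)} \<inter> diagram lam) < 3}"

definition lamI :: "nat set \<Rightarrow> nat list" where
  "lamI I = (THE lam. is_partition lam \<and> 2 \<le> length lam \<and> lam ! 0 = lam ! 1
                      \<and> ribbon_of (rim lam) I)"

definition muI :: "nat set \<Rightarrow> nat list" where
  "muI I = (THE mu. is_partition mu \<and> diagram mu \<subseteq> diagram (lamI I)
                    \<and> diagram (lamI I) - diagram mu = rim (lamI I))"

definition sI :: "nat set \<Rightarrow> nat" where
  "sI I = lamI I ! 0 - 1"

definition NN_coeff :: "nat \<Rightarrow> nat set \<Rightarrow> nat" where
  "NN_coeff j I = (\<Sum>D \<in> {D \<in> excited (lamI I) (muI I).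
                         card {c \<in> D. fst c = 1} = sI I - j}.
                    \<Prod>c \<in> {c \<in> D. fst c \<noteq> 1}. hook (lamI I) c)"

definition Iodd :: "nat \<Rightarrow> nat set" where
  "Iodd a = {2 * k + 1 | k. k \<le> a}"

end

theory Submission
  imports Defs "HOL-Library.FuncSet"
begin

(* For I_a the partition lambda is (a + 1, a + 1, a, ..., 1) and mu is the staircase (a, ..., 1), so
   lambda/mu is a ribbon of width two and each cell of an excited diagram moves at most once.  Excited
   diagrams therefore correspond to order filters M of the staircase (the moved cells), and those with
   i cells left in row 1 to weakly increasing f on {1..i} with j <= f j <= a, column j keeping its top
   a + 1 - f j cells.  Along each column the hook products telescope, which gives
     C_(a-i)(I_a) / C_a(I_a) = B_i(a) * S_i(a),   S_i(a) = sum_f prod_j 1 / ((2 e_j + 1) (2 e_j + 3)),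
   with e_j = f j - j and B_i(x) = prod_(j<i) (2x - 2j + 1).  Splitting S_i(a) according to whether
   f i = a shows that T_i(a) = B_i(a) S_i(a) satisfies
     (2a - 2i + 1) T_i(a) - (2a + 1) T_i(a - 1) = T_(i-1)(a).
   The operator on the left is diagonal in the basis B_0, B_1, ..., so by induction on i the values
   T_i(a), a >= i, are those of a combination of B_0, ..., B_i, a polynomial of degree at most i.
   It is unique because it is determined at infinitely many points. *)

section \<open>Odd falling products and gap sums\<close>

definition odd_falling :: "nat \<Rightarrow> 'a::comm_ring_1 \<Rightarrow> 'a" where
  "odd_falling k x = (\<Prod>j<k. 2 * x - 2 * of_nat j + 1)"

lemma odd_falling_0 [simp]: "odd_falling 0 x = 1"
  by (simp add: odd_falling_def)

lemma odd_falling_Suc: "odd_falling (Suc k) x = odd_falling k x * (2 * x - 2 * of_nat k + 1)"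
  by (simp add: odd_falling_def)

lemma odd_falling_Suc_shift: "odd_falling (Suc k) x = (2 * x + 1) * odd_falling k (x - 1)"
  unfolding odd_falling_def prod.lessThan_Suc_shift by (simp add: algebra_simps)

lemma odd_falling_of_nat_nonzero:
  assumes "k \<le> Suc n"
  shows "odd_falling k (of_nat n :: 'a::{comm_ring_1, ring_char_0}) \<noteq> 0"
proof -
  have "2 * of_nat n - 2 * of_nat j + 1 = (of_nat (2 * (n - j) + 1) :: 'a)" if "j < k" for j
    using that assms by (simp add: of_nat_diff)
  then have "odd_falling k (of_nat n :: 'a) = of_nat (\<Prod>j<k. 2 * (n - j) + 1)"
    unfolding odd_falling_def of_nat_prod by (intro prod.cong) auto
  then show ?thesis
    by (simp only: of_nat_eq_0_iff) simp
qed

definition odd_diff :: "nat \<Rightarrow> ('a::comm_ring_1 \<Rightarrow> 'a) \<Rightarrow> 'a \<Rightarrow> 'a" where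
  "odd_diff m V x = (2 * x - 2 * of_nat m + 1) * V x - (2 * x + 1) * V (x - 1)"

lemma odd_diff_odd_falling:
  "odd_diff m (odd_falling k) x = 2 * (of_nat k - of_nat m) * odd_falling k x"
proof (cases k)
  case (Suc k')
  have "odd_falling (Suc k') x = (2 * x + 1) * odd_falling k' (x - 1)"
    and "odd_falling (Suc k') (x - 1) = odd_falling k' (x - 1) * (2 * (x - 1) - 2 * of_nat k' + 1)"
    by (rule odd_falling_Suc_shift, rule odd_falling_Suc)
  then show ?thesis
    unfolding odd_diff_def Suc by (simp only:) (simp add: algebra_simps)
qed (simp add: odd_diff_def algebra_simps)

lemma odd_diff_sum:
  "odd_diff m (\<lambda>x. \<Sum>k\<le>n. q k * odd_falling k x) x
     = (\<Sum>k\<le>n. q k * (2 * (of_nat k - of_nat m)) * odd_falling k x)"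
proof -
  have "odd_diff m (\<lambda>x. \<Sum>k\<le>n. q k * odd_falling k x) x
      = (\<Sum>k\<le>n. q k * odd_diff m (odd_falling k) x)"
    unfolding odd_diff_def
    by (simp add: sum_distrib_left sum_subtractf[symmetric] algebra_simps)
  then show ?thesis
    by (simp add: odd_diff_odd_falling mult.assoc)
qed

lemma odd_diff_solvable:
  fixes q :: "nat \<Rightarrow> 'a::field_char_0"
  obtains p where
    "\<And>x. odd_diff (Suc i) (\<lambda>x. \<Sum>k\<le>Suc i. p k * odd_falling k x) x
            = (\<Sum>k\<le>i. q k * odd_falling k x)"
    "(\<Sum>k\<le>Suc i. p k * odd_falling k (of_nat i)) = 0"
proof -
  define p0 where "p0 k = q k / (2 * (of_nat k - of_nat (Suc i)))" for k
  \<comment> \<open>The top coefficient is annihilated by the operator and is free for the initial condition.\<close>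
  define top where
    "top = - (\<Sum>k\<le>i. p0 k * odd_falling k (of_nat i)) / odd_falling (Suc i) (of_nat i :: 'a)"
  define p where "p k = (if k \<le> i then p0 k else top)" for k
  have "odd_diff (Suc i) (\<lambda>x. \<Sum>k\<le>Suc i. p k * odd_falling k x) x
      = (\<Sum>k\<le>i. q k * odd_falling k x)" for x
  proof -
    have "p k * (2 * (of_nat k - of_nat (Suc i))) = q k" if "k \<le> i" for k
    proof -
      have "2 * (of_nat k - of_nat (Suc i)) \<noteq> (0 :: 'a)"
        using that by (simp only: mult_eq_0_iff right_minus_eq of_nat_eq_iff) simp
      moreover have "p k = q k / (2 * (of_nat k - of_nat (Suc i)))"
        using that by (simp add: p_def p0_def)
      ultimately show ?thesis
        by simp
    qed
    then show ?thesis
      unfolding odd_diff_sum by simp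
  qed
  moreover have "(\<Sum>k\<le>Suc i. p k * odd_falling k (of_nat i)) = 0"
    using odd_falling_of_nat_nonzero[of "Suc i" i, where 'a='a] by (simp add: p_def top_def)
  ultimately show thesis by (rule that)
qed

definition gap_weight :: "nat \<Rightarrow> 'a::field_char_0" where
  "gap_weight e = 1 / ((2 * of_nat e + 1) * (2 * of_nat e + 3))"

lemma odd_falling_gap_weight:
  assumes "i \<le> a"
  shows "odd_falling (Suc (Suc i)) (of_nat (Suc a)) * gap_weight (a - i)
           = (odd_falling i (of_nat (Suc a)) :: 'a::field_char_0)"
proof -
  define u :: 'a where "u = 2 * of_nat (a - i) + 1"
  have "u = of_nat (2 * (a - i) + 1)" "u + 2 = of_nat (2 * (a - i) + 3)"
    by (simp_all add: u_def)
  then have "u \<noteq> 0" "u + 2 \<noteq> 0"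
    by (simp_all only: of_nat_eq_0_iff)
  moreover have "odd_falling (Suc (Suc i)) (of_nat (Suc a)) = odd_falling i (of_nat (Suc a)) * (u * (u + 2))"
    using assms by (simp add: odd_falling_Suc u_def of_nat_diff algebra_simps)
  moreover have "gap_weight (a - i) = 1 / (u * (u + 2))"
    by (simp add: gap_weight_def u_def algebra_simps)
  ultimately show ?thesis
    by simp
qed

definition col_seqs :: "nat \<Rightarrow> nat \<Rightarrow> (nat \<Rightarrow> nat) set" where
  "col_seqs i a = {f \<in> {1..i} \<rightarrow>\<^sub>E {..a}. (\<forall>j\<in>{1..i}. j \<le> f j) \<and> mono_on {1..i} f}"

definition gap_sum :: "nat \<Rightarrow> nat \<Rightarrow> 'a::field_char_0" where
  "gap_sum i a = (\<Sum>f\<in>col_seqs i a. \<Prod>j=1..i. gap_weight (f j - j))"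

lemma col_seqs_0: "col_seqs 0 a = {\<lambda>_. undefined}"
  by (auto simp: col_seqs_def PiE_def extensional_def mono_on_def)

lemma gap_sum_0 [simp]: "gap_sum 0 a = 1"
  by (simp add: gap_sum_def col_seqs_0)

lemma col_seqs_empty:
  assumes "a < i"
  shows "col_seqs i a = {}"
proof -
  have "i \<le> f i \<and> f i \<le> a" if "f \<in> col_seqs i a" for f
    using that assms by (auto simp: col_seqs_def PiE_iff)
  then show ?thesis
    using assms by force
qed

lemma gap_sum_eq_0: "a < i \<Longrightarrow> gap_sum i a = 0"
  by (simp add: gap_sum_def col_seqs_empty)

lemma finite_col_seqs: "finite (col_seqs i a)"
  by (rule finite_subset[of _ "{1..i} \<rightarrow>\<^sub>E {..a}"]) (auto simp: col_seqs_def finite_PiE)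

lemma col_seqs_Suc_Suc:
  assumes "i \<le> a"
  shows "col_seqs (Suc i) (Suc a) = col_seqs (Suc i) a \<union> (\<lambda>f. f(Suc i := Suc a)) ` col_seqs i (Suc a)"
proof (intro equalityI subsetI)
  fix f assume f: "f \<in> col_seqs (Suc i) (Suc a)"
  show "f \<in> col_seqs (Suc i) a \<union> (\<lambda>f. f(Suc i := Suc a)) ` col_seqs i (Suc a)"
  proof (cases "f (Suc i) = Suc a")
    case True
    have "mono_on {1..i} (f(Suc i := undefined))"
      by (rule mono_onI) (use f in \<open>auto simp: col_seqs_def intro: mono_onD\<close>)
    then have "f(Suc i := undefined) \<in> col_seqs i (Suc a)"
      using f by (auto simp: col_seqs_def PiE_def extensional_def)
    moreover have "f = (f(Suc i := undefined))(Suc i := Suc a)"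
      using True by (simp add: fun_eq_iff)
    ultimately show ?thesis by blast
  next
    case False
    have "f j \<le> f (Suc i)" if "j \<in> {1..Suc i}" for j
      using f that by (auto simp: col_seqs_def intro: mono_onD)
    moreover have "f (Suc i) \<le> Suc a"
      using f by (auto simp: col_seqs_def PiE_iff)
    ultimately have "f \<in> col_seqs (Suc i) a"
      using f False by (force simp: col_seqs_def)
    then show ?thesis by blast
  qed
next
  fix f assume "f \<in> col_seqs (Suc i) a \<union> (\<lambda>f. f(Suc i := Suc a)) ` col_seqs i (Suc a)"
  then show "f \<in> col_seqs (Suc i) (Suc a)"
  proof
    assume "f \<in> col_seqs (Suc i) a"
    then show ?thesis by (auto simp: col_seqs_def PiE_iff)
  next
    assume "f \<in> (\<lambda>f. f(Suc i := Suc a)) ` col_seqs i (Suc a)"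
    then obtain g where g: "g \<in> col_seqs i (Suc a)" and f: "f = g(Suc i := Suc a)"
      by blast
    have "mono_on {1..Suc i} f"
    proof (rule mono_onI)
      fix r s assume "r \<in> {1..Suc i}" "s \<in> {1..Suc i}" "r \<le> s"
      then show "f r \<le> f s"
        using g unfolding f col_seqs_def by (auto simp: le_Suc_eq intro: mono_onD)
    qed
    then show ?thesis
      using g assms unfolding f col_seqs_def by (auto simp: PiE_def extensional_def le_Suc_eq)
  qed
qed

lemma gap_sum_Suc_Suc:
  assumes "i \<le> a"
  shows "gap_sum (Suc i) (Suc a) = gap_sum (Suc i) a + gap_weight (a - i) * gap_sum i (Suc a)"
proof -
  let ?ext = "\<lambda>f. f(Suc i := Suc a)"
  let ?w = "\<lambda>i f. \<Prod>j=1..i. gap_weight (f j - j)"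
  have "f (Suc i) \<le> a" if "f \<in> col_seqs (Suc i) a" for f
    using that by (auto simp: col_seqs_def PiE_iff)
  then have disj: "col_seqs (Suc i) a \<inter> ?ext ` col_seqs i (Suc a) = {}"
    by force
  have "(?ext f)(Suc i := undefined) = f" if "f \<in> col_seqs i (Suc a)" for f
    using that by (auto simp: col_seqs_def PiE_def extensional_def fun_eq_iff)
  then have "inj_on ?ext (col_seqs i (Suc a))"
    by (rule inj_on_inverseI[where g = "\<lambda>f. f(Suc i := undefined)"])
  moreover have "?w (Suc i) (?ext f) = gap_weight (a - i) * ?w i f" for f
  proof -
    have "?w i (?ext f) = ?w i f"
      by (intro prod.cong) auto
    then show ?thesis
      by (simp add: prod.nat_ivl_Suc' mult.commute)
  qed
  ultimately have "(\<Sum>f\<in>?ext ` col_seqs i (Suc a). ?w (Suc i) f) = gap_weight (a - i) * gap_sum i (Suc a)"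
    by (simp add: sum.reindex gap_sum_def sum_distrib_left mult.commute)
  then show ?thesis
    unfolding gap_sum_def col_seqs_Suc_Suc[OF assms]
    by (subst sum.union_disjoint) (auto simp: finite_col_seqs disj)
qed

lemma odd_falling_gap_sum_step:
  assumes "i \<le> a"
  defines "x \<equiv> of_nat (Suc a) :: 'a::field_char_0"
  shows "(2 * x - 2 * of_nat (Suc i) + 1) * (odd_falling (Suc i) x * gap_sum (Suc i) (Suc a))
       = (2 * x + 1) * (odd_falling (Suc i) (x - 1) * gap_sum (Suc i) a)
         + odd_falling i x * gap_sum i (Suc a)"
proof -
  have "(2 * x - 2 * of_nat (Suc i) + 1) * (odd_falling (Suc i) x * gap_sum (Suc i) (Suc a))
      = odd_falling (Suc (Suc i)) x * gap_sum (Suc i) (Suc a)"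
    by (simp add: odd_falling_Suc algebra_simps)
  also have "\<dots> = odd_falling (Suc (Suc i)) x * gap_sum (Suc i) a
      + (odd_falling (Suc (Suc i)) x * gap_weight (a - i)) * gap_sum i (Suc a)"
    using assms by (simp add: gap_sum_Suc_Suc algebra_simps)
  also have "\<dots> = (2 * x + 1) * (odd_falling (Suc i) (x - 1) * gap_sum (Suc i) a)
      + odd_falling i x * gap_sum i (Suc a)"
    unfolding x_def odd_falling_gap_weight[OF assms(1)]
    by (simp add: odd_falling_Suc_shift[of "Suc i"] algebra_simps)
  finally show ?thesis .
qed

lemma odd_falling_gap_sum_eq_solution:
  fixes V W :: "'a::field_char_0 \<Rightarrow> 'a"
  assumes level: "\<And>a. i \<le> a \<Longrightarrow> odd_falling i (of_nat a) * gap_sum i a = W (of_nat a)"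
    and diff: "\<And>x. odd_diff (Suc i) V x = W x"
    and init: "V (of_nat i) = 0"
    and "i \<le> a"
  shows "odd_falling (Suc i) (of_nat a) * gap_sum (Suc i) a = V (of_nat a)"
  using \<open>i \<le> a\<close>
proof (induction a rule: dec_induct)
  case base
  show ?case
    using init by (simp add: gap_sum_eq_0)
next
  case (step a)
  define x :: 'a where "x = of_nat (Suc a)"
  have "2 * x - 2 * of_nat (Suc i) + 1 = of_nat (2 * (a - i) + 1)"
    using step.hyps(1) by (simp add: x_def of_nat_diff)
  then have nonzero: "2 * x - 2 * of_nat (Suc i) + 1 \<noteq> 0"
    by (simp only: of_nat_eq_0_iff)
  have "(2 * x - 2 * of_nat (Suc i) + 1) * (odd_falling (Suc i) x * gap_sum (Suc i) (Suc a))
      = (2 * x + 1) * V (x - 1) + W x"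
    using odd_falling_gap_sum_step[OF step.hyps(1), where 'a='a] step.IH level[of "Suc a"] step.hyps(1)
    by (simp add: x_def)
  also have "\<dots> = (2 * x - 2 * of_nat (Suc i) + 1) * V x"
    using diff[of x] unfolding odd_diff_def by (simp add: diff_eq_eq add.commute)
  finally show ?case
    using nonzero by (simp add: x_def)
qed

lemma odd_falling_gap_sum_expansion:
  "\<exists>q. \<forall>a\<ge>i. odd_falling i (of_nat a) * gap_sum i a
                 = (\<Sum>k\<le>i. q k * odd_falling k (of_nat a :: 'a::field_char_0))"
proof (induction i)
  case 0
  show ?case
    by (rule exI[of _ "\<lambda>_. 1"]) simp
next
  case (Suc i)
  then obtain q where q: "\<And>a. i \<le> a \<Longrightarrow> odd_falling i (of_nat a) * gap_sum i a
      = (\<Sum>k\<le>i. q k * odd_falling k (of_nat a :: 'a))"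
    by blast
  obtain p :: "nat \<Rightarrow> 'a" where
    p_diff: "\<And>x. odd_diff (Suc i) (\<lambda>x. \<Sum>k\<le>Suc i. p k * odd_falling k x) x
                 = (\<Sum>k\<le>i. q k * odd_falling k x)" and
    p_init: "(\<Sum>k\<le>Suc i. p k * odd_falling k (of_nat i)) = 0"
    using odd_diff_solvable[where i = i and q = q] by blast
  have "odd_falling (Suc i) (of_nat a) * gap_sum (Suc i) a = (\<Sum>k\<le>Suc i. p k * odd_falling k (of_nat a))"
    if "Suc i \<le> a" for a
    using odd_falling_gap_sum_eq_solution[where W = "\<lambda>x. \<Sum>k\<le>i. q k * odd_falling k x",
        OF q p_diff p_init] that by simp
  then show ?case
    by blast
qed

section \<open>The shape of \<open>\<lambda>\<close> and \<open>\<mu>\<close> for \<open>I\<^sub>a\<close>\<close>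

definition lam_odd :: "nat \<Rightarrow> nat list" where
  "lam_odd a = (a + 1) # map (\<lambda>k. a + 1 - k) [0..<a + 1]"

definition mu_odd :: "nat \<Rightarrow> nat list" where
  "mu_odd a = map (\<lambda>k. a - k) [0..<a]"

definition staircase :: "nat \<Rightarrow> (nat \<times> nat) set" where
  "staircase a = {(i, j). 1 \<le> i \<and> 1 \<le> j \<and> i + j \<le> a + 1}"

lemma finite_staircase: "finite (staircase a)"
  by (rule finite_subset[of _ "{0..a} \<times> {0..a}"]) (auto simp: staircase_def)

lemma length_lam_odd [simp]: "length (lam_odd a) = a + 2"
  by (simp add: lam_odd_def)

lemma nth_lam_odd: "k < a + 2 \<Longrightarrow> lam_odd a ! k = (if k = 0 then a + 1 else a + 2 - k)"
  by (cases k) (auto simp: lam_odd_def nth_Cons' simp del: upt_Suc)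

lemma is_partition_lam_odd: "is_partition (lam_odd a)"
  unfolding is_partition_def sorted_rev_iff_nth_mono
  by (auto simp: nth_lam_odd in_set_conv_nth)

lemma is_partition_mu_odd: "is_partition (mu_odd a)"
  unfolding is_partition_def sorted_rev_iff_nth_mono
  by (auto simp: mu_odd_def in_set_conv_nth)

lemma mem_diagram_lam_odd:
  "(i, j) \<in> diagram (lam_odd a) \<longleftrightarrow> 1 \<le> j \<and> (i = 1 \<and> j \<le> a + 1 \<or> 2 \<le> i \<and> i + j \<le> a + 3)"
proof (cases "i \<le> 1")
  case False
  then have "i - 1 \<noteq> 0" by simp
  then show ?thesis
    using False by (auto simp: diagram_def nth_lam_odd)
qed (auto simp: diagram_def nth_lam_odd)

lemma diagram_mu_odd: "diagram (mu_odd a) = staircase a"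
  by (auto simp: diagram_def staircase_def mu_odd_def)

lemma hook_lam_odd:
  assumes "2 \<le> i" "1 \<le> j" "i + j \<le> a + 3"
  shows "hook (lam_odd a) (i, j) = 2 * (a + 3 - i - j) + 1"
proof -
  have "{j'. (i, j') \<in> diagram (lam_odd a) \<and> j \<le> j'} = {j..a + 3 - i}"
    and "{i'. (i', j) \<in> diagram (lam_odd a) \<and> i < i'} = {i<..a + 3 - j}"
    using assms by (auto simp: mem_diagram_lam_odd)
  then show ?thesis
    using assms by (simp add: hook_def)
qed

lemma card_inter_less_card_iff:
  assumes "finite A"
  shows "card (A \<inter> S) < card A \<longleftrightarrow> \<not> A \<subseteq> S"
proof
  assume "\<not> A \<subseteq> S"
  then have "A \<inter> S \<subset> A" by blast
  then show "card (A \<inter> S) < card A"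
    using assms by (rule psubset_card_mono[rotated])
qed (use assms in \<open>auto simp: Int_absorb2\<close>)

lemma mem_rim_iff:
  "(i, j) \<in> rim lam \<longleftrightarrow>
     (i, j) \<in> diagram lam \<and> \<not> {(i, j + 1), (i + 1, j), (i + 1, j + 1)} \<subseteq> diagram lam"
proof -
  let ?N = "{(i, j + 1), (i + 1, j), (i + 1, j + 1)}"
  have "finite ?N" "card ?N = 3"
    by simp_all
  then have "card (?N \<inter> diagram lam) < 3 \<longleftrightarrow> \<not> ?N \<subseteq> diagram lam"
    using card_inter_less_card_iff by metis
  then show ?thesis
    by (simp add: rim_def Int_commute)
qed

lemma rim_subset_diagram: "rim lam \<subseteq> diagram lam"
  by (auto simp: rim_def)

lemma mem_rim_lam_odd:
  "(i, j) \<in> rim (lam_odd a) \<longleftrightarrow>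
     i = 1 \<and> j = a + 1 \<or> 2 \<le> i \<and> 1 \<le> j \<and> a + 2 \<le> i + j \<and> i + j \<le> a + 3"
  unfolding mem_rim_iff insert_subset mem_diagram_lam_odd by auto

lemma lam_odd_minus_rim: "diagram (lam_odd a) - rim (lam_odd a) = staircase a"
  by (auto simp: staircase_def mem_diagram_lam_odd mem_rim_lam_odd)

definition ribbon_step :: "nat \<times> nat \<Rightarrow> nat \<times> nat \<Rightarrow> bool" where
  "ribbon_step c c' \<longleftrightarrow> c' = (fst c, snd c + 1) \<or> fst c = fst c' + 1 \<and> snd c' = snd c"

definition descents :: "(nat \<times> nat) list \<Rightarrow> nat set" where
  "descents cs = {d. 1 \<le> d \<and> d < length cs \<and> fst (cs ! (d - 1)) = fst (cs ! d) + 1}"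

lemma ribbon_of_iff:
  "ribbon_of R I \<longleftrightarrow> (\<exists>cs. cs \<noteq> [] \<and> set cs = R
     \<and> (\<forall>k. k + 1 < length cs \<longrightarrow> ribbon_step (cs ! k) (cs ! (k + 1))) \<and> I = descents cs)"
  unfolding ribbon_of_def ribbon_step_def descents_def ..

definition odd_ribbon_path :: "nat \<Rightarrow> (nat \<times> nat) list" where
  "odd_ribbon_path a = map (\<lambda>k. (a + 2 - (k + 1) div 2, 1 + k div 2)) [0..<2 * a + 2]"

lemma length_odd_ribbon_path [simp]: "length (odd_ribbon_path a) = 2 * a + 2"
  by (simp add: odd_ribbon_path_def)

lemma nth_odd_ribbon_path:
  "k < 2 * a + 2 \<Longrightarrow> odd_ribbon_path a ! k = (a + 2 - (k + 1) div 2, 1 + k div 2)"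
  by (simp add: odd_ribbon_path_def del: upt_Suc)

lemma set_odd_ribbon_path: "set (odd_ribbon_path a) = rim (lam_odd a)"
proof (intro equalityI subsetI)
  fix c assume "c \<in> set (odd_ribbon_path a)"
  then obtain k where k: "k < 2 * a + 2" "c = (a + 2 - (k + 1) div 2, 1 + k div 2)"
    by (auto simp: odd_ribbon_path_def simp del: upt_Suc)
  then show "c \<in> rim (lam_odd a)"
    by (cases "even k") (auto elim!: evenE oddE simp: mem_rim_lam_odd)
next
  fix c assume c: "c \<in> rim (lam_odd a)"
  obtain i j where ij: "c = (i, j)"
    by fastforce
  have on_path: "odd_ribbon_path a ! k \<in> set (odd_ribbon_path a)" if "k < 2 * a + 2" for k
    using that by simp
  show "c \<in> set (odd_ribbon_path a)"
  proof (cases "i + j = a + 3")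
    case True
    then have "c = odd_ribbon_path a ! (2 * (j - 1))"
      using c ij by (auto simp: mem_rim_lam_odd nth_odd_ribbon_path)
    moreover have "2 * (j - 1) < 2 * a + 2"
      using c ij True by (auto simp: mem_rim_lam_odd)
    ultimately show ?thesis
      using on_path by simp
  next
    case False
    then have "c = odd_ribbon_path a ! (2 * j - 1)"
      using c ij by (auto simp: mem_rim_lam_odd nth_odd_ribbon_path)
    moreover have "2 * j - 1 < 2 * a + 2"
      using c ij False by (auto simp: mem_rim_lam_odd)
    ultimately show ?thesis
      using on_path by simp
  qed
qed

lemma odd_ribbon_path_steps:
  "k + 1 < length (odd_ribbon_path a) \<Longrightarrow> ribbon_step (odd_ribbon_path a ! k) (odd_ribbon_path a ! (k + 1))"
  by (cases "even k") (auto elim!: evenE oddE simp: ribbon_step_def nth_odd_ribbon_path)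

lemma descents_odd_ribbon_path: "descents (odd_ribbon_path a) = Iodd a"
proof (intro equalityI subsetI)
  fix d assume "d \<in> Iodd a"
  then obtain m where "d = 2 * m + 1" "m \<le> a"
    by (auto simp: Iodd_def)
  then show "d \<in> descents (odd_ribbon_path a)"
    by (simp add: descents_def nth_odd_ribbon_path)
next
  fix d assume "d \<in> descents (odd_ribbon_path a)"
  then have d: "1 \<le> d" "d < 2 * a + 2" "a + 2 - d div 2 = a + 2 - (d + 1) div 2 + 1"
    by (auto simp: descents_def nth_odd_ribbon_path)
  then have "odd d"
    by presburger
  then obtain m where "d = 2 * m + 1"
    by (blast elim: oddE)
  then show "d \<in> Iodd a"
    using d by (auto simp: Iodd_def)
qed

lemma ribbon_of_lam_odd: "ribbon_of (rim (lam_odd a)) (Iodd a)"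
  unfolding ribbon_of_iff
  using set_odd_ribbon_path odd_ribbon_path_steps descents_odd_ribbon_path
  by (intro exI[of _ "odd_ribbon_path a"]) (auto simp: odd_ribbon_path_def)

lemma row_end_in_rim:
  assumes "is_partition lam" "1 \<le> r" "r \<le> length lam"
  shows "(r, lam ! (r - 1)) \<in> rim lam"
proof -
  have "lam ! (r - 1) \<in> set lam"
    using assms by (intro nth_mem) simp
  then have "lam ! (r - 1) \<noteq> 0"
    using assms(1) unfolding is_partition_def by metis
  then show ?thesis
    using assms unfolding mem_rim_iff by (auto simp: diagram_def)
qed

lemma corner_in_rim:
  assumes "is_partition lam" "lam \<noteq> []"
  shows "(length lam, 1) \<in> rim lam"
proof -
  have "lam ! (length lam - 1) \<in> set lam"
    using assms by (intro nth_mem) simp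
  then have "lam ! (length lam - 1) \<noteq> 0"
    using assms(1) unfolding is_partition_def by metis
  then show ?thesis
    using assms unfolding mem_rim_iff by (auto simp: diagram_def Suc_le_eq)
qed

lemma ribbon_path_coords:
  assumes steps: "\<And>k. k + 1 < length cs \<Longrightarrow> ribbon_step (cs ! k) (cs ! (k + 1))"
    and "k < length cs"
  shows "fst (cs ! k) + card {d \<in> descents cs. d \<le> k} = fst (cs ! 0)
       \<and> snd (cs ! k) + card {d \<in> descents cs. d \<le> k} = snd (cs ! 0) + k"
  using \<open>k < length cs\<close>
proof (induction k)
  case 0
  have "{d \<in> descents cs. d \<le> 0} = {}"
    by (auto simp: descents_def)
  then show ?case
    by simp
next
  case (Suc k)
  let ?D = "descents cs"
  have IH: "fst (cs ! k) + card {d \<in> ?D. d \<le> k} = fst (cs ! 0)"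
    "snd (cs ! k) + card {d \<in> ?D. d \<le> k} = snd (cs ! 0) + k"
    using Suc by simp_all
  have Suc_in_D: "Suc k \<in> ?D \<longleftrightarrow> fst (cs ! k) = fst (cs ! Suc k) + 1"
    using Suc.prems by (simp add: descents_def)
  have split: "{d \<in> ?D. d \<le> Suc k}
      = (if Suc k \<in> ?D then insert (Suc k) {d \<in> ?D. d \<le> k} else {d \<in> ?D. d \<le> k})"
    by (auto simp: le_Suc_eq)
  from steps[of k] Suc.prems
  have "cs ! (k + 1) = (fst (cs ! k), snd (cs ! k) + 1) \<or>
      fst (cs ! k) = fst (cs ! (k + 1)) + 1 \<and> snd (cs ! (k + 1)) = snd (cs ! k)"
    by (simp add: ribbon_step_def)
  then show ?case
  proof (elim disjE)
    assume right: "cs ! (k + 1) = (fst (cs ! k), snd (cs ! k) + 1)"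
    then have "Suc k \<notin> ?D"
      using Suc_in_D by simp
    then show ?thesis
      using IH right split by simp
  next
    assume up: "fst (cs ! k) = fst (cs ! (k + 1)) + 1 \<and> snd (cs ! (k + 1)) = snd (cs ! k)"
    then have "Suc k \<in> ?D"
      using Suc_in_D by simp
    then show ?thesis
      using IH up split by simp
  qed
qed

definition odd_ups :: "nat \<Rightarrow> nat \<Rightarrow> nat" where
  "odd_ups a k = min ((k + 1) div 2) (a + 1)"

lemma card_Iodd_le: "card {d \<in> Iodd a. d \<le> k} = odd_ups a k"
proof -
  have "m < odd_ups a k \<longleftrightarrow> m \<le> a \<and> 2 * m + 1 \<le> k" for m
    unfolding odd_ups_def min_less_iff_conj by presburger
  then have "{m. m \<le> a \<and> 2 * m + 1 \<le> k} = {..<odd_ups a k}"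
    by auto
  moreover have "{d \<in> Iodd a. d \<le> k} = (\<lambda>m. 2 * m + 1) ` {m. m \<le> a \<and> 2 * m + 1 \<le> k}"
    by (auto simp: Iodd_def)
  ultimately show ?thesis
    by (simp add: card_image inj_on_def)
qed

lemma rim_of_odd_ribbon:
  assumes part: "is_partition lam" and "lam \<noteq> []" and "ribbon_of (rim lam) (Iodd a)"
  obtains n where "2 * a + 1 < n"
    and "rim lam = (\<lambda>k. (length lam - odd_ups a k, 1 + k - odd_ups a k)) ` {..<n}"
proof -
  obtain cs where cells: "set cs = rim lam"
    and steps: "\<And>k. k + 1 < length cs \<Longrightarrow> ribbon_step (cs ! k) (cs ! (k + 1))"
    and descents: "Iodd a = descents cs"
    using assms(3) unfolding ribbon_of_iff by blast
  have coords: "fst (cs ! k) + odd_ups a k = fst (cs ! 0) \<and> snd (cs ! k) + odd_ups a k = snd (cs ! 0) + k"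
    if "k < length cs" for k
    using ribbon_path_coords[OF steps that] unfolding descents[symmetric] card_Iodd_le .
  have long: "2 * a + 1 < length cs"
    using descents by (auto simp: Iodd_def descents_def)
  obtain k0 where k0: "k0 < length cs" "cs ! k0 = (length lam, 1)"
    using corner_in_rim[OF assms(1,2)] unfolding cells[symmetric] in_set_conv_nth by blast
  have "cs ! 0 \<in> rim lam"
    using long unfolding cells[symmetric] by (intro nth_mem) linarith
  then have "cs ! 0 \<in> diagram lam"
    using rim_subset_diagram by blast
  then have "fst (cs ! 0) \<le> length lam" "1 \<le> snd (cs ! 0)"
    by (auto simp: diagram_def)
  then have "cs ! 0 = (length lam, 1)"
    using coords[OF k0(1)] k0(2) by (simp add: prod_eq_iff)
  then have "cs ! k = (length lam - odd_ups a k, 1 + k - odd_ups a k)" if "k < length cs" for k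
    using coords[OF that] by (simp add: prod_eq_iff) arith
  moreover have "rim lam = (!) cs ` {..<length cs}"
    unfolding cells[symmetric] by (simp add: lessThan_atLeast0 nth_image)
  ultimately have "rim lam = (\<lambda>k. (length lam - odd_ups a k, 1 + k - odd_ups a k)) ` {..<length cs}"
    by simp
  with long show thesis
    by (rule that)
qed

context
  fixes lam :: "nat list" and a n :: nat
  assumes part: "is_partition lam" and long: "2 * a + 1 < n"
    and rim_eq: "rim lam = (\<lambda>k. (length lam - odd_ups a k, 1 + k - odd_ups a k)) ` {..<n}"
begin

lemma odd_ribbon_cell_in_diagram:
  "k < n \<Longrightarrow> (length lam - odd_ups a k, 1 + k - odd_ups a k) \<in> diagram lam"
  using rim_eq rim_subset_diagram by blast

lemma odd_ribbon_row_end: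
  assumes "1 \<le> r" "r \<le> length lam"
  shows "\<exists>k<n. length lam - odd_ups a k = r \<and> 1 + k - odd_ups a k = lam ! (r - 1)"
  using row_end_in_rim[OF part assms] rim_eq by auto

lemma odd_ribbon_length:
  shows "length lam = a + 2" and "a + 1 \<le> lam ! 0"
proof -
  have "1 \<le> length lam"
    using odd_ribbon_cell_in_diagram[of 0] long by (simp add: diagram_def odd_ups_def)
  then obtain k where k: "length lam - odd_ups a k = 1" "1 + k - odd_ups a k = lam ! 0"
    using odd_ribbon_row_end[of 1] by auto
  have "1 \<le> length lam - odd_ups a (2 * a + 1)"
    using odd_ribbon_cell_in_diagram[OF long] by (simp add: diagram_def)
  moreover have "odd_ups a k \<le> a + 1"
    by (simp add: odd_ups_def)
  ultimately show "length lam = a + 2"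
    using k(1) by (simp add: odd_ups_def)
  then have "odd_ups a k = a + 1"
    using k(1) by simp
  then show "a + 1 \<le> lam ! 0"
    using k(2) by (simp add: odd_ups_def)
qed

lemma odd_ribbon_row:
  assumes r: "2 \<le> r" "r \<le> a + 2"
  shows "lam ! (r - 1) = a + 3 - r"
proof -
  obtain k where k: "length lam - odd_ups a k = r" "1 + k - odd_ups a k = lam ! (r - 1)"
    using odd_ribbon_row_end[of r] r odd_ribbon_length(1) by auto
  then have "odd_ups a k = a + 2 - r"
    using odd_ribbon_length(1) r by simp
  then have "k \<le> 2 * (a + 2 - r)"
    using r by (simp add: odd_ups_def)
  then have "lam ! (r - 1) \<le> a + 3 - r"
    using k \<open>odd_ups a k = a + 2 - r\<close> r by simp
  moreover have "(r, a + 3 - r) \<in> diagram lam"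
  proof -
    define m where "m = a + 2 - r"
    have "odd_ups a (2 * m) = m" "2 * m < n"
      using r long by (simp_all add: m_def odd_ups_def)
    moreover have "(length lam - m, 1 + 2 * m - m) = (r, a + 3 - r)"
      using r odd_ribbon_length(1) by (simp add: m_def)
    ultimately show ?thesis
      using odd_ribbon_cell_in_diagram[of "2 * m"] by simp
  qed
  ultimately show ?thesis
    by (simp add: diagram_def)
qed

end

lemma lam_odd_unique:
  assumes "is_partition lam" "2 \<le> length lam" "lam ! 0 = lam ! 1"
    and "ribbon_of (rim lam) (Iodd a)"
  shows "lam = lam_odd a"
proof -
  have "lam \<noteq> []"
    using assms(2) by auto
  then obtain n where "2 * a + 1 < n"
    and "rim lam = (\<lambda>k. (length lam - odd_ups a k, 1 + k - odd_ups a k)) ` {..<n}"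
    by (rule rim_of_odd_ribbon[OF assms(1) _ assms(4)])
  note length = odd_ribbon_length[OF assms(1) this] and row = odd_ribbon_row[OF assms(1) this]
  have "lam ! 0 = a + 1"
    using length(2) row[of 2] assms(3) by simp
  show ?thesis
  proof (rule nth_equalityI)
    fix k assume "k < length lam"
    then show "lam ! k = lam_odd a ! k"
      using length(1) row[of "k + 1"] \<open>lam ! 0 = a + 1\<close> by (cases k) (simp_all add: nth_lam_odd)
  qed (simp add: length(1))
qed

lemma lamI_Iodd: "lamI (Iodd a) = lam_odd a"
  unfolding lamI_def
proof (rule the_equality)
  show "is_partition (lam_odd a) \<and> 2 \<le> length (lam_odd a) \<and> lam_odd a ! 0 = lam_odd a ! 1
        \<and> ribbon_of (rim (lam_odd a)) (Iodd a)"
    using is_partition_lam_odd ribbon_of_lam_odd by (simp add: nth_lam_odd)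
next
  fix lam assume "is_partition lam \<and> 2 \<le> length lam \<and> lam ! 0 = lam ! 1 \<and> ribbon_of (rim lam) (Iodd a)"
  then show "lam = lam_odd a"
    by (elim conjE) (rule lam_odd_unique)
qed

lemma sI_Iodd: "sI (Iodd a) = a"
  by (simp add: sI_def lamI_Iodd nth_lam_odd)

lemma diagram_column_1:
  assumes "is_partition lam"
  shows "{i. (i, 1) \<in> diagram lam} = {1..length lam}"
proof -
  have "1 \<le> lam ! (i - 1)" if "1 \<le> i" "i \<le> length lam" for i
  proof -
    have "lam ! (i - 1) \<in> set lam"
      using that by (intro nth_mem) simp
    then show ?thesis
      using assms unfolding is_partition_def by (metis less_one not_le)
  qed
  then show ?thesis
    by (auto simp: diagram_def)
qed

lemma diagram_row:
  assumes "k < length lam"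
  shows "{j. (Suc k, j) \<in> diagram lam} = {1..lam ! k}"
  using assms by (auto simp: diagram_def)

lemma diagram_inj:
  assumes "is_partition l1" "is_partition l2" "diagram l1 = diagram l2"
  shows "l1 = l2"
proof (rule nth_equalityI)
  have "length l = card {i. (i, 1) \<in> diagram l}" if "is_partition l" for l
    unfolding diagram_column_1[OF that] by simp
  then show len: "length l1 = length l2"
    using assms by presburger
  fix k assume "k < length l1"
  then have "l ! k = card {j. (Suc k, j) \<in> diagram l}" if "l \<in> {l1, l2}" for l
    using that len by (auto simp: diagram_row)
  then show "l1 ! k = l2 ! k"
    using assms(3) by simp
qed

lemma muI_Iodd: "muI (Iodd a) = mu_odd a"
  unfolding muI_def lamI_Iodd
proof (rule the_equality)
  show "is_partition (mu_odd a) \<and> diagram (mu_odd a) \<subseteq> diagram (lam_odd a)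
        \<and> diagram (lam_odd a) - diagram (mu_odd a) = rim (lam_odd a)"
    unfolding diagram_mu_odd lam_odd_minus_rim[symmetric]
    using is_partition_mu_odd rim_subset_diagram by (simp add: Diff_Diff_Int Int_absorb1)
next
  fix mu assume mu: "is_partition mu \<and> diagram mu \<subseteq> diagram (lam_odd a)
        \<and> diagram (lam_odd a) - diagram mu = rim (lam_odd a)"
  then have "diagram mu = diagram (mu_odd a)"
    unfolding diagram_mu_odd lam_odd_minus_rim[symmetric] by (metis Diff_Diff_Int Int_absorb1)
  then show "mu = mu_odd a"
    using mu is_partition_mu_odd by (intro diagram_inj) simp_all
qed

section \<open>Excited diagrams as filters of the staircase\<close>

definition diag_shift :: "nat \<times> nat \<Rightarrow> nat \<times> nat" where
  "diag_shift c = (fst c + 1, snd c + 1)"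

lemma diag_shift_Pair [simp]: "diag_shift (i, j) = (i + 1, j + 1)"
  by (simp add: diag_shift_def)

lemma mem_diag_shift_image:
  "(i, j) \<in> diag_shift ` M \<longleftrightarrow> 1 \<le> i \<and> 1 \<le> j \<and> (i - 1, j - 1) \<in> M"
proof
  assume "(i, j) \<in> diag_shift ` M"
  then show "1 \<le> i \<and> 1 \<le> j \<and> (i - 1, j - 1) \<in> M"
    by (auto simp: diag_shift_def)
next
  assume "1 \<le> i \<and> 1 \<le> j \<and> (i - 1, j - 1) \<in> M"
  then have "(i, j) = diag_shift (i - 1, j - 1)" "(i - 1, j - 1) \<in> M"
    by auto
  then show "(i, j) \<in> diag_shift ` M"
    by blast
qed

definition staircase_filter :: "nat \<Rightarrow> (nat \<times> nat) set \<Rightarrow> bool" where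
  "staircase_filter a M \<longleftrightarrow> M \<subseteq> staircase a \<and>
     (\<forall>i j i' j'. (i, j) \<in> M \<longrightarrow> (i', j') \<in> staircase a \<longrightarrow> i \<le> i' \<longrightarrow> j \<le> j' \<longrightarrow> (i', j') \<in> M)"

lemma staircase_filter_subset: "staircase_filter a M \<Longrightarrow> M \<subseteq> staircase a"
  by (simp add: staircase_filter_def)

lemma staircase_filterD:
  "staircase_filter a M \<Longrightarrow> (i, j) \<in> M \<Longrightarrow> (i', j') \<in> staircase a \<Longrightarrow> i \<le> i' \<Longrightarrow> j \<le> j'
    \<Longrightarrow> (i', j') \<in> M"
  unfolding staircase_filter_def by blast

definition excite :: "nat \<Rightarrow> (nat \<times> nat) set \<Rightarrow> (nat \<times> nat) set" where
  "excite a M = (staircase a - M) \<union> diag_shift ` M"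

lemma staircase_filter_insert:
  assumes M: "staircase_filter a M" and ij: "(i, j) \<in> staircase a"
    and below: "(i + 1, j) \<in> staircase a \<Longrightarrow> (i + 1, j) \<in> M"
    and right: "(i, j + 1) \<in> staircase a \<Longrightarrow> (i, j + 1) \<in> M"
  shows "staircase_filter a (insert (i, j) M)"
  unfolding staircase_filter_def
proof (intro conjI allI impI)
  show "insert (i, j) M \<subseteq> staircase a"
    using ij staircase_filter_subset[OF M] by blast
next
  fix p q p' q' assume pq: "(p, q) \<in> insert (i, j) M" and p'q': "(p', q') \<in> staircase a"
    and le: "p \<le> p'" "q \<le> q'"
  consider "(p, q) \<in> M" | "(p', q') = (i, j)" | "(p, q) = (i, j)" "i < p'" | "(p, q) = (i, j)" "j < q'"
    using pq le by fastforce
  then show "(p', q') \<in> insert (i, j) M"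
  proof cases
    case 1
    then show ?thesis
      using staircase_filterD[OF M _ p'q' le] by blast
  next
    case 3
    then have "(i + 1, j) \<in> staircase a"
      using ij p'q' le by (auto simp: staircase_def)
    then show ?thesis
      using staircase_filterD[OF M below p'q'] 3 le by simp
  next
    case 4
    then have "(i, j + 1) \<in> staircase a"
      using ij p'q' le by (auto simp: staircase_def)
    then show ?thesis
      using staircase_filterD[OF M right p'q'] 4 le by simp
  qed simp
qed

lemma excite_move:
  assumes M: "staircase_filter a M" and ij: "(i, j) \<in> excite a M"
    and diagonal: "(i + 1, j + 1) \<in> diagram (lam_odd a)"
    and right: "(i, j + 1) \<notin> excite a M" and below: "(i + 1, j) \<notin> excite a M"
  shows "staircase_filter a (insert (i, j) M)"
    and "insert (i + 1, j + 1) (excite a M - {(i, j)}) = excite a (insert (i, j) M)"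
proof -
  have not_shifted: "(i, j) \<notin> diag_shift ` M"
  proof
    assume "(i, j) \<in> diag_shift ` M"
    then have ij': "1 \<le> i" "1 \<le> j" "(i - 1, j - 1) \<in> M"
      by (auto simp: mem_diag_shift_image)
    show False
    proof (cases "(i, j - 1) \<in> staircase a")
      case True
      then have "(i, j - 1) \<in> M"
        using staircase_filterD[OF M ij'(3)] by simp
      then have "(i + 1, j) \<in> excite a M"
        using ij' unfolding excite_def by (auto simp: mem_diag_shift_image)
      then show False
        using below by simp
    next
      case False
      then show False
        using ij' diagonal staircase_filter_subset[OF M] by (auto simp: mem_diagram_lam_odd staircase_def)
    qed
  qed
  then have "(i, j) \<in> staircase a - M"
    using ij unfolding excite_def by blast
  then show "staircase_filter a (insert (i, j) M)"
    using M right below unfolding excite_def by (intro staircase_filter_insert) blast+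
  show "insert (i + 1, j + 1) (excite a M - {(i, j)}) = excite a (insert (i, j) M)"
    using not_shifted unfolding excite_def by auto
qed

lemma excited_imp_excite:
  assumes "D \<in> excited (lam_odd a) (mu_odd a)"
  shows "\<exists>M. staircase_filter a M \<and> D = excite a M"
  using assms
proof (induction rule: excited.induct)
  case base
  show ?case
    by (rule exI[of _ "{}"]) (simp add: staircase_filter_def excite_def diagram_mu_odd)
next
  case (move D i j)
  then obtain M where M: "staircase_filter a M" and D: "D = excite a M"
    by blast
  note step = excite_move[OF M move.hyps(2-5)[unfolded D]]
  show ?case
    using step unfolding D by blast
qed

lemma staircase_filter_remove_min:
  assumes M: "staircase_filter a M" and ij: "(i, j) \<in> M"
    and min: "\<forall>p q. (p, q) \<in> M \<longrightarrow> i + j \<le> p + q"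
  defines "M' \<equiv> M - {(i, j)}"
  shows "staircase_filter a M'"
    and "(i, j) \<in> excite a M'"
    and "(i + 1, j + 1) \<in> diagram (lam_odd a)"
    and "(i, j + 1) \<notin> excite a M'" "(i + 1, j) \<notin> excite a M'" "(i + 1, j + 1) \<notin> excite a M'"
    and "insert (i + 1, j + 1) (excite a M' - {(i, j)}) = excite a M"
proof -
  have sub: "M \<subseteq> staircase a"
    using staircase_filter_subset[OF M] .
  then have ij_stair: "(i, j) \<in> staircase a"
    using ij by blast
  have M'_small: "(p, q) \<notin> M'" if "p + q < i + j" for p q
    using min that unfolding M'_def by fastforce
  show "staircase_filter a M'"
    using M min sub unfolding staircase_filter_def M'_def by fastforce
  show "(i, j) \<in> excite a M'"
    using ij_stair unfolding excite_def M'_def by blast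
  show "(i + 1, j + 1) \<in> diagram (lam_odd a)"
    using ij_stair by (simp add: staircase_def mem_diagram_lam_odd)
  have up_moved: "(p, q) \<in> M" if "(p, q) \<in> staircase a" "i \<le> p" "j \<le> q" for p q
    using staircase_filterD[OF M ij that] .
  show "(i, j + 1) \<notin> excite a M'"
    using up_moved[of i "j + 1"] M'_small[of "i - 1" j] ij_stair
    unfolding excite_def M'_def by (auto simp: mem_diag_shift_image)
  show "(i + 1, j) \<notin> excite a M'"
    using up_moved[of "i + 1" j] M'_small[of i "j - 1"] ij_stair
    unfolding excite_def M'_def by (auto simp: mem_diag_shift_image)
  show "(i + 1, j + 1) \<notin> excite a M'"
    using up_moved[of "i + 1" "j + 1"] ij
    unfolding excite_def M'_def by (auto simp: mem_diag_shift_image)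
  have "(i, j) \<notin> diag_shift ` M'"
    using M'_small[of "i - 1" "j - 1"] by (auto simp: mem_diag_shift_image)
  moreover have "(i + 1, j + 1) \<in> diag_shift ` M"
    using ij by (metis diag_shift_Pair image_eqI)
  ultimately show "insert (i + 1, j + 1) (excite a M' - {(i, j)}) = excite a M"
    using ij unfolding excite_def M'_def by auto
qed

lemma excite_mem_excited:
  assumes "staircase_filter a M"
  shows "excite a M \<in> excited (lam_odd a) (mu_odd a)"
  using assms
proof (induction "card M" arbitrary: M rule: less_induct)
  case less
  show ?case
  proof (cases "M = {}")
    case True
    then show ?thesis
      using excited.base[of "mu_odd a" "lam_odd a"] by (simp add: excite_def diagram_mu_odd)
  next
    case False
    then obtain c where c: "c \<in> M" "\<forall>c'. c' \<in> M \<longrightarrow> fst c + snd c \<le> fst c' + snd c'"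
      using ex_has_least_nat[of "\<lambda>c. c \<in> M" _ "\<lambda>c. fst c + snd c"] by blast
    obtain i j where ij: "c = (i, j)"
      by fastforce
    have least: "\<forall>p q. (p, q) \<in> M \<longrightarrow> i + j \<le> p + q"
      using c(2) ij by fastforce
    have "(i, j) \<in> M"
      using c(1) ij by simp
    note step = staircase_filter_remove_min[of a M i j, OF less.prems this least]
    have "finite M"
      using staircase_filter_subset[OF less.prems] finite_staircase by (rule finite_subset)
    then have "card (M - {(i, j)}) < card M"
      using c(1) ij by (intro card_Diff1_less) simp_all
    from less.hyps[OF this step(1)] have "excite a (M - {(i, j)}) \<in> excited (lam_odd a) (mu_odd a)" .
    from excited.move[OF this step(2-6)] show ?thesis
      unfolding step(7) .
  qed
qed

lemma mem_staircase_filter_iff: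
  assumes "staircase_filter a M" "c \<in> staircase a"
  shows "c \<in> M \<longleftrightarrow> c \<notin> excite a M \<or> c \<in> diag_shift ` M"
proof -
  obtain i j where c: "c = (i, j)"
    by fastforce
  have "(i, j) \<in> M" if "(i - 1, j - 1) \<in> M" "1 \<le> i" "1 \<le> j"
    using staircase_filterD[OF assms(1) that(1) assms(2)[unfolded c]] that by simp
  then show ?thesis
    using assms(2) unfolding c excite_def by (auto simp: mem_diag_shift_image)
qed

lemma excite_inj:
  assumes "staircase_filter a M1" "staircase_filter a M2" "excite a M1 = excite a M2"
  shows "M1 = M2"
proof -
  have "c \<in> M1 \<longleftrightarrow> c \<in> M2" if "c \<in> staircase a" for c
    using that
  proof (induction "fst c" arbitrary: c rule: less_induct)
    case less
    obtain i j where c: "c = (i, j)"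
      by fastforce
    have "(i - 1, j - 1) \<in> M1 \<longleftrightarrow> (i - 1, j - 1) \<in> M2" if "1 \<le> i" "1 \<le> j"
    proof (cases "(i - 1, j - 1) \<in> staircase a")
      case True
      then show ?thesis
        using less.hyps[of "(i - 1, j - 1)"] that c by simp
    next
      case False
      then show ?thesis
        using staircase_filter_subset assms(1,2) by blast
    qed
    then have "c \<in> diag_shift ` M1 \<longleftrightarrow> c \<in> diag_shift ` M2"
      unfolding c mem_diag_shift_image by blast
    then show ?case
      using mem_staircase_filter_iff[OF assms(1) less.prems] mem_staircase_filter_iff[OF assms(2) less.prems]
        assms(3) by blast
  qed
  then show ?thesis
    using staircase_filter_subset[OF assms(1)] staircase_filter_subset[OF assms(2)] by blast
qed

lemma excited_lam_odd: "excited (lam_odd a) (mu_odd a) = excite a ` {M. staircase_filter a M}"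
  using excited_imp_excite excite_mem_excited by blast

section \<open>Excited diagrams with a given number of cells in row 1\<close>

lemma row_1_excite:
  assumes "M \<subseteq> staircase a"
  shows "{c \<in> excite a M. fst c = 1} = {c \<in> staircase a - M. fst c = 1}"
  using assms unfolding excite_def by (auto simp: staircase_def diag_shift_def)

definition kept_cells :: "nat \<Rightarrow> nat \<Rightarrow> (nat \<Rightarrow> nat) \<Rightarrow> (nat \<times> nat) set" where
  "kept_cells a i f = {(k, j). 1 \<le> j \<and> j \<le> i \<and> 1 \<le> k \<and> k + f j \<le> a + 1}"

lemma col_seqsD:
  assumes "f \<in> col_seqs i a"
  shows "\<And>j. 1 \<le> j \<Longrightarrow> j \<le> i \<Longrightarrow> j \<le> f j \<and> f j \<le> a"
    and "\<And>j j'. 1 \<le> j \<Longrightarrow> j \<le> j' \<Longrightarrow> j' \<le> i \<Longrightarrow> f j \<le> f j'"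
    and "\<And>j. j \<notin> {1..i} \<Longrightarrow> f j = undefined"
  using assms by (auto simp: col_seqs_def PiE_def extensional_def intro: mono_onD)

lemma kept_cells_subset: "f \<in> col_seqs i a \<Longrightarrow> kept_cells a i f \<subseteq> staircase a"
  using col_seqsD(1) by (fastforce simp: kept_cells_def staircase_def)

lemma staircase_filter_moved_cells:
  assumes f: "f \<in> col_seqs i a"
  shows "staircase_filter a (staircase a - kept_cells a i f)"
  unfolding staircase_filter_def
proof (intro conjI allI impI)
  show "staircase a - kept_cells a i f \<subseteq> staircase a"
    by blast
next
  fix p q p' q'
  assume pq: "(p, q) \<in> staircase a - kept_cells a i f" and p'q': "(p', q') \<in> staircase a"
    and le: "p \<le> p'" "q \<le> q'"
  have "(p', q') \<notin> kept_cells a i f"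
  proof
    assume "(p', q') \<in> kept_cells a i f"
    moreover have "f q \<le> f q'" if "q' \<le> i"
      using col_seqsD(2)[OF f _ le(2) that] pq by (simp add: staircase_def)
    ultimately have "(p, q) \<in> kept_cells a i f"
      using pq le by (auto simp: kept_cells_def staircase_def)
    then show False
      using pq by simp
  qed
  then show "(p', q') \<in> staircase a - kept_cells a i f"
    using p'q' by blast
qed

lemma card_row_1_kept_cells:
  assumes "f \<in> col_seqs i a"
  shows "card {c \<in> kept_cells a i f. fst c = 1} = i"
proof -
  have "{c \<in> kept_cells a i f. fst c = 1} = (\<lambda>j. (1, j)) ` {1..i}"
    using col_seqsD(1)[OF assms] by (auto simp: kept_cells_def)
  then show ?thesis
    by (simp add: card_image inj_on_def)
qed

lemma kept_cells_inj:
  assumes f: "f \<in> col_seqs i a" and g: "g \<in> col_seqs i a"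
    and eq: "kept_cells a i f = kept_cells a i g"
  shows "f = g"
proof
  fix j
  show "f j = g j"
  proof (cases "j \<in> {1..i}")
    case True
    have "(a + 1 - h j, j) \<in> kept_cells a i h" if "h \<in> col_seqs i a" for h
      using True col_seqsD(1)[OF that, of j] by (auto simp: kept_cells_def)
    then have "(a + 1 - f j, j) \<in> kept_cells a i g" "(a + 1 - g j, j) \<in> kept_cells a i f"
      using f g eq by auto
    then show ?thesis
      using True col_seqsD(1)[OF f, of j] col_seqsD(1)[OF g, of j] by (auto simp: kept_cells_def)
  next
    case False
    then show ?thesis
      using col_seqsD(3)[OF f] col_seqsD(3)[OF g] by simp
  qed
qed

lemma down_closed_eq_atLeastAtMost:
  assumes "S \<subseteq> {1..N}" "\<And>k k'. k \<in> S \<Longrightarrow> 1 \<le> k' \<Longrightarrow> k' \<le> k \<Longrightarrow> k' \<in> S"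
  shows "S = {1..card S}"
proof (cases "S = {}")
  case False
  have "finite S"
    using assms(1) by (rule finite_subset) simp
  then have "Max S \<in> S" "\<And>k. k \<in> S \<Longrightarrow> k \<le> Max S"
    using False by simp_all
  then have S: "S = {1..Max S}"
    using assms by fastforce
  then have "card S = Max S"
    by (metis card_atLeastAtMost diff_Suc_1)
  with S show ?thesis
    by simp
qed simp

lemma col_seqs_of_heights:
  assumes "\<And>j. j \<in> {1..i} \<Longrightarrow> 1 \<le> h j \<and> h j + j \<le> a + 1"
    and "\<And>j j'. j \<in> {1..i} \<Longrightarrow> j' \<in> {1..i} \<Longrightarrow> j \<le> j' \<Longrightarrow> h j' \<le> h j"
  shows "(\<lambda>j. if j \<in> {1..i} then a + 1 - h j else undefined) \<in> col_seqs i a"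
proof -
  let ?f = "\<lambda>j. if j \<in> {1..i} then a + 1 - h j else undefined"
  have "j \<le> ?f j \<and> ?f j \<le> a" if "j \<in> {1..i}" for j
    using assms(1)[OF that] that by auto
  moreover have "mono_on {1..i} ?f"
  proof (rule mono_onI)
    fix r s assume "r \<in> {1..i}" "s \<in> {1..i}" "r \<le> s"
    then show "?f r \<le> ?f s"
      using assms(2)[of r s] by simp
  qed
  ultimately show ?thesis
    by (auto simp: col_seqs_def PiE_iff extensional_def)
qed

context
  fixes a :: nat and U :: "(nat \<times> nat) set"
  assumes sub: "U \<subseteq> staircase a"
    and down: "\<And>k j k' j'. (k, j) \<in> U \<Longrightarrow> 1 \<le> k' \<Longrightarrow> k' \<le> k \<Longrightarrow> 1 \<le> j' \<Longrightarrow> j' \<le> j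
                 \<Longrightarrow> (k', j') \<in> U"
begin

lemma down_closed_column: "{k. (k, j) \<in> U} = {1..card {k. (k, j) \<in> U}}"
  using sub down by (intro down_closed_eq_atLeastAtMost[of _ a]) (auto simp: staircase_def)

lemma down_closed_row_1: "(1, j) \<in> U \<longleftrightarrow> j \<in> {1..card {c \<in> U. fst c = 1}}"
proof -
  have "{c \<in> U. fst c = 1} = (\<lambda>j. (1, j)) ` {j. (1, j) \<in> U}"
    by force
  then have "card {c \<in> U. fst c = 1} = card {j. (1, j) \<in> U}"
    by (simp add: card_image inj_on_def)
  moreover have "{j. (1, j) \<in> U} = {1..card {j. (1, j) \<in> U}}"
    using sub down by (intro down_closed_eq_atLeastAtMost[of _ a]) (auto simp: staircase_def)
  ultimately have "{j. (1, j) \<in> U} = {1..card {c \<in> U. fst c = 1}}"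
    by simp
  then show ?thesis
    by (metis mem_Collect_eq)
qed

lemma down_closed_column_antimono:
  assumes "1 \<le> j" "j \<le> j'"
  shows "card {k. (k, j') \<in> U} \<le> card {k. (k, j) \<in> U}"
proof (rule card_mono)
  show "finite {k. (k, j) \<in> U}"
    by (subst down_closed_column) simp
  show "{k. (k, j') \<in> U} \<subseteq> {k. (k, j) \<in> U}"
  proof
    fix k assume "k \<in> {k. (k, j') \<in> U}"
    then have "(k, j') \<in> U" "1 \<le> k"
      using sub by (auto simp: staircase_def)
    then show "k \<in> {k. (k, j) \<in> U}"
      using down[of k j' k j] assms by simp
  qed
qed

lemma down_closed_eq_kept_cells:
  assumes row_1: "card {c \<in> U. fst c = 1} = i"
  obtains f where "f \<in> col_seqs i a" "U = kept_cells a i f"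
proof -
  define h where "h j = card {k. (k, j) \<in> U}" for j
  have col: "{k. (k, j) \<in> U} = {1..h j}" for j
    unfolding h_def by (rule down_closed_column)
  have row: "(1, j) \<in> U \<longleftrightarrow> j \<in> {1..i}" for j
    using down_closed_row_1 row_1 by simp
  have h_pos: "1 \<le> h j" if "j \<in> {1..i}" for j
    using col[of j] row[of j] that by fastforce
  have h_le: "h j + j \<le> a + 1" if "j \<in> {1..i}" for j
    using col[of j] h_pos[OF that] sub by (force simp: staircase_def)
  define f where "f j = (if j \<in> {1..i} then a + 1 - h j else undefined)" for j
  have "f \<in> col_seqs i a"
    unfolding f_def using h_pos h_le down_closed_column_antimono
    by (intro col_seqs_of_heights) (auto simp: h_def)
  moreover have "(k, j) \<in> U \<longleftrightarrow> (k, j) \<in> kept_cells a i f" for k j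
  proof
    assume kj: "(k, j) \<in> U"
    then have "1 \<le> k" "1 \<le> j"
      using sub by (auto simp: staircase_def)
    then have "j \<in> {1..i}" "k \<le> h j"
      using row[of j] down[OF kj, of 1 j] col[of j] kj by auto
    then show "(k, j) \<in> kept_cells a i f"
      using h_le[of j] \<open>1 \<le> k\<close> by (auto simp: kept_cells_def f_def)
  next
    assume "(k, j) \<in> kept_cells a i f"
    then have "j \<in> {1..i}" "1 \<le> k" "k \<le> h j"
      using h_le[of j] by (auto simp: kept_cells_def f_def)
    then show "(k, j) \<in> U"
      using col[of j] by auto
  qed
  then have "U = kept_cells a i f"
    by auto
  ultimately show thesis
    by (rule that)
qed

end

lemma excited_level_set:
  "{D \<in> excited (lam_odd a) (mu_odd a). card {c \<in> D. fst c = 1} = i}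
     = (\<lambda>f. excite a (staircase a - kept_cells a i f)) ` col_seqs i a"
proof (intro set_eqI iffI)
  fix D assume "D \<in> {D \<in> excited (lam_odd a) (mu_odd a). card {c \<in> D. fst c = 1} = i}"
  then obtain M where M: "staircase_filter a M" and D: "D = excite a M"
    and row_1: "card {c \<in> excite a M. fst c = 1} = i"
    unfolding excited_lam_odd by blast
  have sub: "M \<subseteq> staircase a"
    using staircase_filter_subset[OF M] .
  obtain f where f: "f \<in> col_seqs i a" "staircase a - M = kept_cells a i f"
  proof (rule down_closed_eq_kept_cells)
    fix k j k' j' assume "(k, j) \<in> staircase a - M" "1 \<le> k'" "k' \<le> k" "1 \<le> j'" "j' \<le> j"
    then show "(k', j') \<in> staircase a - M"
      using staircase_filterD[OF M, of k' j' k j] by (auto simp: staircase_def)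
  qed (use row_1 row_1_excite[OF sub] in auto)
  then have "M = staircase a - kept_cells a i f"
    using sub by blast
  then show "D \<in> (\<lambda>f. excite a (staircase a - kept_cells a i f)) ` col_seqs i a"
    using D f(1) by blast
next
  fix D assume "D \<in> (\<lambda>f. excite a (staircase a - kept_cells a i f)) ` col_seqs i a"
  then obtain f where f: "f \<in> col_seqs i a" and D: "D = excite a (staircase a - kept_cells a i f)"
    by blast
  have "staircase a - (staircase a - kept_cells a i f) = kept_cells a i f"
    using kept_cells_subset[OF f] by blast
  then have "card {c \<in> D. fst c = 1} = i"
    unfolding D row_1_excite[OF Diff_subset] using card_row_1_kept_cells[OF f] by simp
  then show "D \<in> {D \<in> excited (lam_odd a) (mu_odd a). card {c \<in> D. fst c = 1} = i}"
    using D staircase_filter_moved_cells[OF f] by (simp add: excited_lam_odd)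
qed

lemma inj_on_excite_moved_cells:
  "inj_on (\<lambda>f. excite a (staircase a - kept_cells a i f)) (col_seqs i a)"
proof (rule inj_onI)
  fix f g assume f: "f \<in> col_seqs i a" and g: "g \<in> col_seqs i a"
    and eq: "excite a (staircase a - kept_cells a i f) = excite a (staircase a - kept_cells a i g)"
  have "staircase a - kept_cells a i f = staircase a - kept_cells a i g"
    using excite_inj[OF staircase_filter_moved_cells[OF f] staircase_filter_moved_cells[OF g] eq] .
  then have "kept_cells a i f = kept_cells a i g"
    using kept_cells_subset[OF f] kept_cells_subset[OF g] by blast
  then show "f = g"
    using kept_cells_inj[OF f g] by blast
qed

section \<open>Hook weights\<close>

lemma prod_telescope_two:
  fixes g :: "nat \<Rightarrow> 'a::field"
  assumes "\<And>k. g k \<noteq> 0"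
  shows "(\<Prod>k=1..Suc c. (if k = 1 then 1 else g (k - 2)) / g k) = g 0 / (g c * g (Suc c))"
proof (induction c)
  case 0
  show ?case
    using assms[of 0] by simp
next
  case (Suc c)
  let ?F = "\<lambda>k. (if k = 1 then 1 else g (k - 2)) / g k"
  have "(\<Prod>k=1..Suc (Suc c). ?F k) = ?F (Suc (Suc c)) * (\<Prod>k=1..Suc c. ?F k)"
    by (rule prod.nat_ivl_Suc') simp
  also have "\<dots> = g c / g (Suc (Suc c)) * (g 0 / (g c * g (Suc c)))"
    by (simp only: Suc.IH) simp
  also have "\<dots> = g 0 / (g (Suc c) * g (Suc (Suc c)))"
    using assms[of c] by (simp add: field_simps)
  finally show ?case .
qed

lemma hook_lam_odd_shift:
  assumes "(k, j) \<in> staircase a"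
  shows "hook (lam_odd a) (diag_shift (k, j)) = 2 * (a + 1 - k - j) + 1"
  using assms hook_lam_odd[of "k + 1" "j + 1" a] by (simp add: staircase_def)

text \<open>A cell of the staircase contributes its hook to the weight of an excited diagram if it is kept
  (nothing if it lies in row 1) and the hook of its diagonal neighbour if it is moved.\<close>
definition hook_ratio :: "nat \<Rightarrow> nat \<times> nat \<Rightarrow> rat" where
  "hook_ratio a c = (if fst c = 1 then 1 else of_nat (hook (lam_odd a) c)) / of_nat (hook (lam_odd a) (diag_shift c))"

lemma kept_column_prod:
  assumes f: "f \<in> col_seqs i a" and j: "j \<in> {1..i}"
  shows "(\<Prod>k=1..a + 1 - f j. hook_ratio a (k, j)) = of_nat (2 * (a + 1 - j) + 1) * gap_weight (f j - j)"
proof -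
  have fj: "j \<le> f j" "f j \<le> a"
    using col_seqsD(1)[OF f] j by auto
  have len: "a + 1 - f j = Suc (a - f j)"
    using fj by simp
  define g :: "nat \<Rightarrow> rat" where "g k = of_nat (2 * (a + 1 - j - k) + 1)" for k
  have ratio: "hook_ratio a (k, j) = (if k = 1 then 1 else g (k - 2)) / g k" if "k \<in> {1..Suc (a - f j)}" for k
  proof -
    have kj: "1 \<le> k" "1 \<le> j" "k + j \<le> a + 1"
      using that fj j by auto
    then have "hook (lam_odd a) (diag_shift (k, j)) = 2 * (a + 1 - j - k) + 1"
      using hook_lam_odd_shift[of k j a] by (simp add: staircase_def diff_commute)
    moreover have "hook (lam_odd a) (k, j) = 2 * (a + 1 - j - (k - 2)) + 1" if "k \<noteq> 1"
    proof -
      have "hook (lam_odd a) (k, j) = 2 * (a + 3 - k - j) + 1"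
        using that kj by (intro hook_lam_odd) auto
      moreover have "a + 3 - k - j = a + 1 - j - (k - 2)"
        using that kj by simp
      ultimately show ?thesis
        by simp
    qed
    ultimately show ?thesis
      unfolding hook_ratio_def g_def by simp
  qed
  have "(\<Prod>k=1..a + 1 - f j. hook_ratio a (k, j)) = (\<Prod>k=1..Suc (a - f j). (if k = 1 then 1 else g (k - 2)) / g k)"
    unfolding len using ratio by (intro prod.cong) simp_all
  also have "\<dots> = g 0 / (g (a - f j) * g (Suc (a - f j)))"
    by (rule prod_telescope_two) (simp add: g_def del: of_nat_add of_nat_Suc)
  also have "\<dots> = of_nat (2 * (a + 1 - j) + 1) * gap_weight (f j - j)"
    using fj by (simp add: g_def gap_weight_def of_nat_diff algebra_simps)
  finally show ?thesis .
qed

lemma hook_prod_excite: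
  assumes M: "staircase_filter a M"
  shows "(\<Prod>c\<in>{c \<in> excite a M. fst c \<noteq> 1}. hook (lam_odd a) c)
       = (\<Prod>c\<in>{c \<in> staircase a - M. fst c \<noteq> 1}. hook (lam_odd a) c)
         * (\<Prod>c\<in>M. hook (lam_odd a) (diag_shift c))"
proof -
  have sub: "M \<subseteq> staircase a"
    using staircase_filter_subset[OF M] .
  then have "finite M"
    using finite_staircase by (rule finite_subset)
  have "{c \<in> excite a M. fst c \<noteq> 1} = {c \<in> staircase a - M. fst c \<noteq> 1} \<union> diag_shift ` M"
    using sub unfolding excite_def by (auto simp: staircase_def diag_shift_def)
  moreover have "{c \<in> staircase a - M. fst c \<noteq> 1} \<inter> diag_shift ` M = {}"
  proof -
    have "diag_shift (p, q) \<in> M" if "(p, q) \<in> M" "diag_shift (p, q) \<in> staircase a" for p q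
      using staircase_filterD[OF M that(1)] that(2) by simp
    then show ?thesis
      by fastforce
  qed
  moreover have "inj_on diag_shift M"
    by (auto simp: inj_on_def diag_shift_def prod_eq_iff)
  ultimately show ?thesis
    using \<open>finite M\<close> finite_staircase by (simp add: prod.union_disjoint prod.reindex)
qed

lemma prod_kept_cells:
  "(\<Prod>c\<in>kept_cells a i f. g c) = (\<Prod>j=1..i. \<Prod>k=1..a + 1 - f j. g (k, j))"
proof -
  have cells: "kept_cells a i f = (\<lambda>(j, k). (k, j)) ` (SIGMA j:{1..i}. {1..a + 1 - f j})"
    by (auto simp: kept_cells_def image_iff)
  have inj: "inj_on (\<lambda>(j, k). (k, j)) (SIGMA j:{1..i}. {1..a + 1 - f j})"
    by (auto simp: inj_on_def)
  show ?thesis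
    unfolding cells prod.reindex[OF inj] by (subst prod.Sigma) (auto simp: comp_def case_prod_beta)
qed

lemma odd_falling_of_nat_eq_prod:
  assumes "i \<le> a"
  shows "odd_falling i (of_nat a) = (\<Prod>j=1..i. of_nat (2 * (a + 1 - j) + 1) :: 'a::comm_ring_1)"
proof -
  have "odd_falling i (of_nat a) = (\<Prod>j<i. of_nat (2 * (a - j) + 1) :: 'a)"
    unfolding odd_falling_def using assms by (intro prod.cong) (auto simp: of_nat_diff)
  also have "\<dots> = (\<Prod>j=1..i. of_nat (2 * (a + 1 - j) + 1))"
    by (rule prod.reindex_bij_witness[of _ "\<lambda>j. j - 1" Suc]) auto
  finally show ?thesis .
qed

definition staircase_hook_prod :: "nat \<Rightarrow> nat" where
  "staircase_hook_prod a = (\<Prod>c\<in>staircase a. hook (lam_odd a) (diag_shift c))"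

lemma staircase_hook_prod_pos: "0 < staircase_hook_prod a"
  unfolding staircase_hook_prod_def
  using hook_lam_odd_shift by (intro prod_pos) fastforce

lemma hook_prod_excite_col_seq:
  assumes f: "f \<in> col_seqs i a" and "i \<le> a"
  shows "rat_of_nat (\<Prod>c\<in>{c \<in> excite a (staircase a - kept_cells a i f). fst c \<noteq> 1}. hook (lam_odd a) c)
       = of_nat (staircase_hook_prod a) * (odd_falling i (of_nat a) * (\<Prod>j=1..i. gap_weight (f j - j)))"
proof -
  let ?K = "kept_cells a i f"
  let ?h = "\<lambda>c. rat_of_nat (hook (lam_odd a) c)"
  have K: "?K \<subseteq> staircase a"
    using kept_cells_subset[OF f] .
  then have "finite ?K"
    using finite_staircase by (rule finite_subset)
  have K_pos: "?h (diag_shift c) \<noteq> 0" if "c \<in> ?K" for c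
    using that K hook_lam_odd_shift by (cases c) fastforce
  have "rat_of_nat (\<Prod>c\<in>{c \<in> excite a (staircase a - ?K). fst c \<noteq> 1}. hook (lam_odd a) c)
      = (\<Prod>c\<in>{c \<in> ?K. fst c \<noteq> 1}. ?h c) * (\<Prod>c\<in>staircase a - ?K. ?h (diag_shift c))"
    using hook_prod_excite[OF staircase_filter_moved_cells[OF f]] K
    by (simp add: Diff_Diff_Int Int_absorb1 of_nat_prod)
  also have "(\<Prod>c\<in>{c \<in> ?K. fst c \<noteq> 1}. ?h c) = (\<Prod>c\<in>?K. hook_ratio a c) * (\<Prod>c\<in>?K. ?h (diag_shift c))"
  proof -
    have "(\<Prod>c\<in>?K. if fst c = 1 then 1 else ?h c) = (\<Prod>c\<in>{c \<in> ?K. fst c \<noteq> 1}. ?h c)"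
      using \<open>finite ?K\<close> by (subst prod.inter_filter) (auto intro: prod.cong)
    moreover have "(\<Prod>c\<in>?K. ?h (diag_shift c)) \<noteq> 0"
      using K_pos \<open>finite ?K\<close> by simp
    ultimately show ?thesis
      by (simp add: hook_ratio_def prod_dividef)
  qed
  also have "(\<Prod>c\<in>?K. hook_ratio a c) = odd_falling i (of_nat a) * (\<Prod>j=1..i. gap_weight (f j - j))"
    unfolding prod_kept_cells odd_falling_of_nat_eq_prod[OF \<open>i \<le> a\<close>] prod.distrib[symmetric]
    using kept_column_prod[OF f] by (intro prod.cong) auto
  finally show ?thesis
    using prod.subset_diff[OF K finite_staircase, of "\<lambda>c. ?h (diag_shift c)"]
    by (simp add: staircase_hook_prod_def of_nat_prod algebra_simps)
qed

lemma NN_coeff_Iodd: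
  assumes "i \<le> a"
  shows "rat_of_nat (NN_coeff (a - i) (Iodd a))
           = of_nat (staircase_hook_prod a) * (odd_falling i (of_nat a) * gap_sum i a)"
proof -
  let ?D = "\<lambda>f. excite a (staircase a - kept_cells a i f)"
  have "NN_coeff (a - i) (Iodd a)
      = (\<Sum>D\<in>?D ` col_seqs i a. \<Prod>c\<in>{c \<in> D. fst c \<noteq> 1}. hook (lam_odd a) c)"
    unfolding NN_coeff_def lamI_Iodd muI_Iodd sI_Iodd excited_level_set[symmetric]
    using assms by simp
  also have "\<dots> = (\<Sum>f\<in>col_seqs i a. \<Prod>c\<in>{c \<in> ?D f. fst c \<noteq> 1}. hook (lam_odd a) c)"
    by (rule sum.reindex[OF inj_on_excite_moved_cells, unfolded comp_def])
  finally show ?thesis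
    using hook_prod_excite_col_seq[OF _ assms]
    by (simp add: of_nat_sum gap_sum_def sum_distrib_left)
qed

lemma NN_coeff_ratio_Iodd:
  assumes "i \<le> a"
  shows "rat_of_nat (NN_coeff (a - i) (Iodd a)) / of_nat (NN_coeff a (Iodd a))
           = odd_falling i (of_nat a) * gap_sum i a"
  using NN_coeff_Iodd[OF assms] NN_coeff_Iodd[of 0 a] staircase_hook_prod_pos[of a] by simp

section \<open>Polynomiality\<close>

lemma poly_eq_if_eq_on_nat_ge:
  fixes P Q :: "'a::{idom, ring_char_0} poly"
  assumes "degree P \<le> i" "degree Q \<le> i" "\<And>a. i \<le> a \<Longrightarrow> poly P (of_nat a) = poly Q (of_nat a)"
  shows "P = Q"
proof (rule poly_eqI_degree[of "of_nat ` {i..2 * i}"])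
  show "poly P x = poly Q x" if "x \<in> of_nat ` {i..2 * i}" for x
    using that assms(3) by auto
  have "card (of_nat ` {i..2 * i} :: 'a set) = i + 1"
    by (simp add: card_image inj_on_def)
  then show "degree P < card (of_nat ` {i..2 * i} :: 'a set)" "degree Q < card (of_nat ` {i..2 * i} :: 'a set)"
    using assms(1,2) by simp_all
qed

definition odd_falling_poly :: "nat \<Rightarrow> 'a::comm_ring_1 poly" where
  "odd_falling_poly k = (\<Prod>j<k. [:1 - 2 * of_nat j, 2:])"

lemma poly_odd_falling_poly: "poly (odd_falling_poly k) x = odd_falling k x"
  unfolding odd_falling_poly_def odd_falling_def poly_prod by (intro prod.cong) (auto simp: algebra_simps)

lemma degree_odd_falling_poly: "degree (odd_falling_poly k) \<le> k"
proof -
  have "degree (odd_falling_poly k :: 'a poly) \<le> (\<Sum>j<k. degree [:1 - 2 * of_nat j, 2 :: 'a:])"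
    unfolding odd_falling_poly_def
    using degree_prod_sum_le[of "{..<k}" "\<lambda>j. [:1 - 2 * of_nat j, 2 :: 'a:]"] by (simp add: comp_def)
  also have "\<dots> \<le> (\<Sum>j<k. 1)"
    by (intro sum_mono) simp
  finally show ?thesis
    by simp
qed

lemma odd_falling_gap_sum_poly:
  "\<exists>P :: 'a::field_char_0 poly. degree P \<le> i \<and>
     (\<forall>a\<ge>i. poly P (of_nat a) = odd_falling i (of_nat a) * gap_sum i a)"
proof -
  obtain q :: "nat \<Rightarrow> 'a" where q: "\<And>a. i \<le> a \<Longrightarrow>
      odd_falling i (of_nat a) * gap_sum i a = (\<Sum>k\<le>i. q k * odd_falling k (of_nat a))"
    using odd_falling_gap_sum_expansion by blast
  define P where "P = (\<Sum>k\<le>i. smult (q k) (odd_falling_poly k))"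
  have "degree (smult (q k) (odd_falling_poly k)) \<le> i" if "k \<le> i" for k
    using degree_smult_le[of "q k" "odd_falling_poly k"] degree_odd_falling_poly[of k, where 'a = 'a] that
    by linarith
  then have "degree P \<le> i"
    unfolding P_def by (intro degree_sum_le) auto
  moreover have "poly P (of_nat a) = odd_falling i (of_nat a) * gap_sum i a" if "i \<le> a" for a
    using q[OF that] by (simp add: P_def poly_sum poly_odd_falling_poly)
  ultimately show ?thesis
    by blast
qed

theorem theorem7p4:
  fixes i :: nat
  shows "\<exists>!P :: rat poly. degree P \<le> i \<and>
           (\<forall>a :: nat. i \<le> a \<longrightarrow>
              poly P (of_nat a) = of_nat (NN_coeff (a - i) (Iodd a)) / of_nat (NN_coeff a (Iodd a)))"
proof -
  obtain P :: "rat poly" where deg_P: "degree P \<le> i"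
    and poly_P: "\<And>a. i \<le> a \<Longrightarrow> poly P (of_nat a) = odd_falling i (of_nat a) * gap_sum i a"
    using odd_falling_gap_sum_poly by blast
  show ?thesis
  proof (rule ex1I[of _ P])
    show "degree P \<le> i \<and> (\<forall>a. i \<le> a \<longrightarrow>
        poly P (of_nat a) = of_nat (NN_coeff (a - i) (Iodd a)) / of_nat (NN_coeff a (Iodd a)))"
      using deg_P poly_P NN_coeff_ratio_Iodd by simp
  next
    fix Q :: "rat poly"
    assume "degree Q \<le> i \<and> (\<forall>a. i \<le> a \<longrightarrow>
        poly Q (of_nat a) = of_nat (NN_coeff (a - i) (Iodd a)) / of_nat (NN_coeff a (Iodd a)))"
    then show "Q = P"
      using deg_P poly_P NN_coeff_ratio_Iodd by (intro poly_eq_if_eq_on_nat_ge[of Q i P]) auto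
  qed
qed

end
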